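(* Let $\mathbb{F}$ be a field of characteristic not equal to $2$, and let $\ell_1,\ell_2,\ell_3 \in \mathbb{F}$ with $\ell_1 \ne 0$. Let $x_1,x_2 \in \mathbb{F}^2$ with $\|x_1-x_2\| = \ell_1$. Then the number of points $x_3 \in \mathbb{F}^2$ with $\|x_2-x_3\| = \ell_2$ and $\|x_3 - x_1\| = \ell_3$ is exactly $$\mu = \begin{cases} 2 & \text{if } 4\sigma_2-\sigma_1^2 \text{ is a nonzero square in } \mathbb{F},\\ 1 & \text{if } 4\sigma_2-\sigma_1^2 = 0,\\ 0 & \text{if } 4\sigma_2-\sigma_1^2 \text{ is a nonsquare in }\mathbb{F},\end{cases}$$ where $\sigma_1 = \ell_1+\ell_2+\ell_3$ and $\sigma_2 = \ell_1\ell_2+\ell_2\ell_3+\ell_3\ell_1$.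
   Context: For $u=(u_1,u_2), v=(v_1,v_2)\in\mathbb{F}^2$, $\|u-v\| = (u_1-v_1)^2+(u_2-v_2)^2\in\mathbb{F}$. *)

theory Defs
  imports Main
begin

definition qdist :: "'a::field \<times> 'a \<Rightarrow> 'a \<times> 'a \<Rightarrow> 'a" where
  "qdist u v = (fst u - fst v)^2 + (snd u - snd v)^2"

definition is_square :: "'a::field \<Rightarrow> bool" where
  "is_square a \<longleftrightarrow> (\<exists>b. a = b^2)"

end

theory Submission
  imports Defs
begin

text \<open>Put \<open>x3 = x1 + t (x2 - x1) + \<beta> J (x2 - x1)\<close> with \<open>J\<close> the rotation by a right angle.
  Since \<open>\<parallel>x2 - x1\<parallel> = \<ell>\<^sub>1 \<noteq> 0\<close>, these frame coordinates \<open>(t, \<beta>)\<close> cover the whole plane,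
  and \<open>\<parallel>x3 - x1\<parallel> = (t\<^sup>2 + \<beta>\<^sup>2) \<ell>\<^sub>1\<close>, \<open>\<parallel>x2 - x3\<parallel> = ((1 - t)\<^sup>2 + \<beta>\<^sup>2) \<ell>\<^sub>1\<close>. The two circle
  equations therefore fix \<open>t = (\<ell>\<^sub>1 + \<ell>\<^sub>3 - \<ell>\<^sub>2) / (2 \<ell>\<^sub>1)\<close> and leave
  \<open>(2 \<ell>\<^sub>1 \<beta>)\<^sup>2 = 4 \<ell>\<^sub>1 \<ell>\<^sub>3 - (\<ell>\<^sub>1 + \<ell>\<^sub>3 - \<ell>\<^sub>2)\<^sup>2 = 4\<sigma>\<^sub>2 - \<sigma>\<^sub>1\<^sup>2\<close>, whose number of solutions
  is the number of square roots of \<open>4\<sigma>\<^sub>2 - \<sigma>\<^sub>1\<^sup>2\<close>.\<close>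

lemma card_square_roots:
  fixes c :: "'a::field"
  assumes char: "(2::'a) \<noteq> 0"
  shows "finite {b. b^2 = c} \<and> card {b. b^2 = c} =
     (if c = 0 then 1 else if is_square c then 2 else 0)"
proof (cases "c = 0")
  case True
  then have "{b. b^2 = c} = {0::'a}" by auto
  then show ?thesis using True by simp
next
  case False
  show ?thesis
  proof (cases "is_square c")
    case True
    then obtain r where r: "c = r^2" unfolding is_square_def by blast
    have "r \<noteq> - r"
    proof
      assume "r = - r"
      then have "2 * r = 0" by (simp add: algebra_simps)
      with char r False show False by simp
    qed
    moreover have "{b. b^2 = c} = {r, -r}"
      using r by (auto simp: power2_eq_iff)
    ultimately show ?thesis using False True by simp
  next
    case False
    then have "{b. b^2 = c} = {}" unfolding is_square_def by auto
    with \<open>c \<noteq> 0\<close> False show ?thesis by simp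
  qed
qed

lemma four_neq_zero:
  assumes "(2::'a::field) \<noteq> 0"
  shows "(4::'a) \<noteq> 0"
  using assms by (metis mult_2 mult_eq_0_iff numeral_Bit0 one_add_one)

lemma is_square_divide_square_iff:
  fixes c e :: "'a::field"
  assumes "e \<noteq> 0"
  shows "is_square (c / e^2) \<longleftrightarrow> is_square c"
proof
  assume "is_square (c / e^2)"
  then obtain r where "c / e^2 = r^2" unfolding is_square_def by blast
  then have "c = (r * e)^2" using assms by (simp add: field_simps power_mult_distrib)
  then show "is_square c" unfolding is_square_def by blast
next
  assume "is_square c"
  then obtain r where "c = r^2" unfolding is_square_def by blast
  then have "c / e^2 = (r / e)^2" by (simp add: power_divide)
  then show "is_square (c / e^2)" unfolding is_square_def by blast
qed

definition frame :: "'a::field \<times> 'a \<Rightarrow> 'a \<times> 'a \<Rightarrow> 'a \<Rightarrow> 'a \<Rightarrow> 'a \<times> 'a" where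
  "frame x1 x2 t \<beta> =
    (fst x1 + t * (fst x2 - fst x1) - \<beta> * (snd x2 - snd x1),
     snd x1 + t * (snd x2 - snd x1) + \<beta> * (fst x2 - fst x1))"

lemma qdist_frame_base: "qdist (frame x1 x2 t \<beta>) x1 = (t^2 + \<beta>^2) * qdist x1 x2"
  unfolding frame_def qdist_def by (simp add: power2_eq_square algebra_simps)

lemma qdist_frame_tip: "qdist x2 (frame x1 x2 t \<beta>) = ((1 - t)^2 + \<beta>^2) * qdist x1 x2"
  unfolding frame_def qdist_def by (simp add: power2_eq_square algebra_simps)

lemma frame_surj:
  assumes "qdist x1 x2 \<noteq> 0"
  obtains t \<beta> where "y = frame x1 x2 t \<beta>"
proof -
  obtain a b where x1: "x1 = (a, b)" by fastforce
  obtain c d where x2: "x2 = (c, d)" by fastforce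
  obtain u v where y: "y = (u, v)" by fastforce
  define p q where "p = c - a" and "q = d - b"
  define l where "l = p^2 + q^2"
  have "l \<noteq> 0" using assms unfolding l_def p_def q_def x1 x2 qdist_def
    by (simp add: power2_commute)
  \<comment> \<open>the frame coordinates are the dot and cross products of \<open>y - x1\<close> with \<open>x2 - x1\<close>, over \<open>l\<close>\<close>
  define t \<beta> where "t = ((u - a) * p + (v - b) * q) / l"
    and "\<beta> = (p * (v - b) - q * (u - a)) / l"
  have "((u - a) * p + (v - b) * q) * p - (p * (v - b) - q * (u - a)) * q = l * (u - a)"
    "((u - a) * p + (v - b) * q) * q + (p * (v - b) - q * (u - a)) * p = l * (v - b)"
    unfolding l_def by (simp_all add: power2_eq_square algebra_simps)
  then have "u - a = t * p - \<beta> * q" "v - b = t * q + \<beta> * p"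
    unfolding t_def \<beta>_def using \<open>l \<noteq> 0\<close>
    by (metis diff_divide_distrib add_divide_distrib nonzero_mult_div_cancel_left times_divide_eq_left)+
  then have "y = frame x1 x2 t \<beta>"
    unfolding frame_def x1 x2 y p_def q_def by (simp add: algebra_simps)
  then show thesis by (rule that)
qed

lemma inj_frame:
  assumes "qdist x1 x2 \<noteq> 0"
  shows "inj (frame x1 x2 t)"
proof (rule injI)
  fix \<beta> \<gamma> assume "frame x1 x2 t \<beta> = frame x1 x2 t \<gamma>"
  then have "(\<beta> - \<gamma>) * (snd x2 - snd x1) = 0" "(\<beta> - \<gamma>) * (fst x2 - fst x1) = 0"
    unfolding frame_def by (auto simp: algebra_simps)
  moreover have "x1 \<noteq> x2" using assms unfolding qdist_def by auto
  ultimately show "\<beta> = \<gamma>" by (auto simp: prod_eq_iff)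
qed

lemma frame_on_circles_iff:
  fixes l1 l2 l3 :: "'a::field"
  assumes char: "(2::'a) \<noteq> 0"
    and l1: "l1 \<noteq> 0"
    and d12: "qdist x1 x2 = l1"
  shows "qdist x2 (frame x1 x2 t \<beta>) = l2 \<and> qdist (frame x1 x2 t \<beta>) x1 = l3 \<longleftrightarrow>
    t = (l1 + l3 - l2) / (2 * l1) \<and>
    \<beta>^2 = (4 * l1 * l3 - (l1 + l3 - l2)^2) / (2 * l1)^2"
proof -
  define m where "m = l1 + l3 - l2"
  have four: "(4::'a) \<noteq> 0" using four_neq_zero[OF char] .
  have "qdist x2 (frame x1 x2 t \<beta>) = l2 \<and> qdist (frame x1 x2 t \<beta>) x1 = l3 \<longleftrightarrow>
      ((1 - t)^2 + \<beta>^2) * l1 = l2 \<and> (t^2 + \<beta>^2) * l1 = l3"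
    by (simp add: qdist_frame_base qdist_frame_tip d12)
  \<comment> \<open>subtracting the two equations eliminates \<open>\<beta>\<close> and leaves a linear equation in \<open>t\<close>\<close>
  also have "\<dots> \<longleftrightarrow> (1 - 2 * t) * l1 = l2 - l3 \<and> (t^2 + \<beta>^2) * l1 = l3"
    by (auto simp: power2_eq_square algebra_simps)
  also have "\<dots> \<longleftrightarrow> t = m / (2 * l1) \<and> ((m / (2 * l1))^2 + \<beta>^2) * l1 = l3"
  proof -
    have "(1 - 2 * t) * l1 = l2 - l3 \<longleftrightarrow> t = m / (2 * l1)"
      using char l1 unfolding m_def by (auto simp: field_simps)
    then show ?thesis by auto
  qed
  also have "((m / (2 * l1))^2 + \<beta>^2) * l1 = l3 \<longleftrightarrow> \<beta>^2 = (4 * l1 * l3 - m^2) / (2 * l1)^2"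
  proof -
    have "((m / (2 * l1))^2 + \<beta>^2) * l1 = (m^2 + (2 * l1)^2 * \<beta>^2) / (4 * l1)"
      using four l1 by (simp add: field_simps power2_eq_square)
    moreover have "\<beta>^2 = (4 * l1 * l3 - m^2) / (2 * l1)^2 \<longleftrightarrow> m^2 + (2 * l1)^2 * \<beta>^2 = 4 * l1 * l3"
      using four l1 by (auto simp: field_simps power2_eq_square)
    ultimately show ?thesis using four l1 by (simp add: divide_eq_eq ac_simps)
  qed
  finally show ?thesis unfolding m_def .
qed

lemma circles_inter_eq_frame_image:
  fixes l1 l2 l3 :: "'a::field"
  assumes char: "(2::'a) \<noteq> 0"
    and l1: "l1 \<noteq> 0"
    and d12: "qdist x1 x2 = l1"
  shows "{x3. qdist x2 x3 = l2 \<and> qdist x3 x1 = l3} =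
    frame x1 x2 ((l1 + l3 - l2) / (2 * l1)) `
      {\<beta>. \<beta>^2 = (4 * l1 * l3 - (l1 + l3 - l2)^2) / (2 * l1)^2}"
    (is "?C = frame x1 x2 ?t0 ` {\<beta>. \<beta>^2 = ?k}")
proof (intro set_eqI iffI)
  fix x3 assume on_circles: "x3 \<in> ?C"
  obtain t \<beta> where x3: "x3 = frame x1 x2 t \<beta>" using frame_surj l1 d12 by metis
  with on_circles have "t = ?t0" "\<beta>^2 = ?k"
    using frame_on_circles_iff[OF char l1 d12] by simp_all
  with x3 show "x3 \<in> frame x1 x2 ?t0 ` {\<beta>. \<beta>^2 = ?k}" by simp
next
  fix x3 assume "x3 \<in> frame x1 x2 ?t0 ` {\<beta>. \<beta>^2 = ?k}"
  then obtain \<beta> where "\<beta>^2 = ?k" "x3 = frame x1 x2 ?t0 \<beta>" by auto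
  then show "x3 \<in> ?C" using frame_on_circles_iff[OF char l1 d12] by simp
qed

theorem lemma4p1:
  fixes l1 l2 l3 :: "'a::field"
    and x1 x2 :: "'a \<times> 'a"
  assumes char: "(2::'a) \<noteq> 0"
    and l1: "l1 \<noteq> 0"
    and d12: "qdist x1 x2 = l1"
  defines "\<sigma>1 \<equiv> l1 + l2 + l3"
    and "\<sigma>2 \<equiv> l1 * l2 + l2 * l3 + l3 * l1"
  shows "finite {x3. qdist x2 x3 = l2 \<and> qdist x3 x1 = l3}
    \<and> card {x3. qdist x2 x3 = l2 \<and> qdist x3 x1 = l3} =
      (if 4 * \<sigma>2 - \<sigma>1^2 = 0 then 1
       else if is_square (4 * \<sigma>2 - \<sigma>1^2) then 2
       else 0)"
proof -
  define D where "D = 4 * \<sigma>2 - \<sigma>1^2"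
  have D: "D = 4 * l1 * l3 - (l1 + l3 - l2)^2"
    unfolding D_def \<sigma>1_def \<sigma>2_def by (simp add: power2_eq_square algebra_simps)
  define t0 where "t0 = (l1 + l3 - l2) / (2 * l1)"
  define k where "k = D / (2 * l1)^2"
  have circles: "{x3. qdist x2 x3 = l2 \<and> qdist x3 x1 = l3} = frame x1 x2 t0 ` {\<beta>. \<beta>^2 = k}"
    unfolding t0_def k_def D by (rule circles_inter_eq_frame_image[OF char l1 d12])
  have "card (frame x1 x2 t0 ` {\<beta>. \<beta>^2 = k}) = card {\<beta>. \<beta>^2 = k}"
    using inj_frame[of x1 x2 t0] l1 d12 by (simp add: card_image inj_on_subset)
  moreover have "2 * l1 \<noteq> 0" using char l1 by simp
  then have "k = 0 \<longleftrightarrow> D = 0" "is_square k \<longleftrightarrow> is_square D"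
    unfolding k_def divide_eq_0_iff using power_not_zero is_square_divide_square_iff by blast+
  ultimately show ?thesis
    unfolding circles D_def[symmetric] using card_square_roots[OF char, of k] by auto
qed

end
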